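(* Let $R$ be an $n$-torsion clean ring (respectively, a strongly $n$-torsion clean ring). Then there exist finitely many elements $r_1,\ldots,r_k\in R$ with clean (respectively, strongly clean) decompositions $r_i=e_i+u_i$, $1\leq i\leq k$, such that $n=\mathrm{LCM}(o(u_1),\ldots,o(u_k))$. In particular: (1) if the unit group $U(R)$ has finite exponent $s$, then $n$ divides $s$; (2) if $R$ is commutative, then $U(R)$ contains an element of order $n$.
   Context: All rings are associative with identity. $o(u)$ denotes the order of a unit $u$ in $U(R)$. A clean decomposition of $r$ is $r=e+u$ with $e$ idempotent and $u$ a unit; it is strongly clean if also $eu=ue$. A ring $R$ is (strongly) $n$-torsion clean if every $r\in R$ can be written $r=e+u$ with $e^2=e$, $u\in U(R)$, $u^n=1$ (and $eu=ue$ in the strong case), and $n$ is the smallest natural number with this property. *)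

theory Defs
  imports Main
begin

definition is_unit_r :: "'a::ring_1 \<Rightarrow> bool" where
  "is_unit_r u \<longleftrightarrow> (\<exists>v. u * v = 1 \<and> v * u = 1)"

definition idem :: "'a::ring_1 \<Rightarrow> bool" where
  "idem e \<longleftrightarrow> e * e = e"

text \<open>Order of a unit; 0 encodes infinite order.\<close>
definition uord :: "'a::ring_1 \<Rightarrow> nat" where
  "uord u = (if \<exists>m>0. u ^ m = 1 then (LEAST m. m > 0 \<and> u ^ m = 1) else 0)"

definition tc_prop :: "bool \<Rightarrow> nat \<Rightarrow> 'a::ring_1 itself \<Rightarrow> bool" where
  "tc_prop strong n R \<longleftrightarrow>
     (\<forall>r::'a. \<exists>e u. idem e \<and> is_unit_r u \<and> u ^ n = 1 \<and> r = e + u \<and> (strong \<longrightarrow> e * u = u * e))"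

definition n_torsion_clean :: "nat \<Rightarrow> 'a::ring_1 itself \<Rightarrow> bool" where
  "n_torsion_clean n R \<longleftrightarrow> n > 0 \<and> tc_prop False n R \<and> (\<forall>m. 0 < m \<and> m < n \<longrightarrow> \<not> tc_prop False m R)"

definition strongly_n_torsion_clean :: "nat \<Rightarrow> 'a::ring_1 itself \<Rightarrow> bool" where
  "strongly_n_torsion_clean n R \<longleftrightarrow> n > 0 \<and> tc_prop True n R \<and> (\<forall>m. 0 < m \<and> m < n \<longrightarrow> \<not> tc_prop True m R)"

definition units_exponent :: "'a::ring_1 itself \<Rightarrow> nat \<Rightarrow> bool" where
  "units_exponent R s \<longleftrightarrow> s > 0 \<and> (\<forall>u::'a. is_unit_r u \<longrightarrow> u ^ s = 1) \<and>
     (\<forall>t. t > 0 \<and> (\<forall>u::'a. is_unit_r u \<longrightarrow> u ^ t = 1) \<longrightarrow> s \<le> t)"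

end

theory Submission
  imports Defs "HOL-Computational_Algebra.Primes"
begin

text \<open>A minimal exponent \<open>n\<close> is recovered from any \<open>m dvd n\<close> with \<open>u ^ m = 1\<close> for every unit
  occurring in a decomposition \<open>r = e + u\<close> with \<open>u ^ n = 1\<close>: the ring is then already \<open>m\<close>-torsion
  clean, so \<open>m = n\<close>. Taking for \<open>m\<close> the lcm of the orders of these units gives the first claim,
  and \<open>m = gcd n s\<close> gives (1). For (2), commuting units of orders \<open>a\<close> and \<open>b\<close> yield one of order
  \<open>lcm a b\<close>, because \<open>lcm a b\<close> splits into coprime factors \<open>a' dvd a\<close> and \<open>b' dvd b\<close>.\<close>

lemma uord_pos_iff: "uord (u::'a::ring_1) > 0 \<longleftrightarrow> (\<exists>m>0. u ^ m = 1)"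
proof
  assume "uord u > 0"
  then show "\<exists>m>0. u ^ m = 1" by (metis uord_def less_irrefl)
next
  assume h: "\<exists>m>0. u ^ m = 1"
  then show "uord u > 0" using LeastI_ex[OF h] by (simp add: uord_def)
qed

lemma power_uord_eq_one: "uord (u::'a::ring_1) > 0 \<Longrightarrow> u ^ uord u = 1"
  using LeastI_ex[of "\<lambda>m. m > 0 \<and> u ^ m = 1"] by (simp add: uord_pos_iff uord_def)

lemma power_eq_one_iff_uord_dvd:
  assumes "uord (u::'a::ring_1) > 0"
  shows "u ^ k = 1 \<longleftrightarrow> uord u dvd k"
proof
  assume "uord u dvd k"
  then show "u ^ k = 1" by (auto simp: power_mult power_uord_eq_one[OF assms])
next
  assume k: "u ^ k = 1"
  let ?d = "uord u"
  have least: "?d = (LEAST m. m > 0 \<and> u ^ m = 1)"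
    using assms[unfolded uord_pos_iff] by (simp add: uord_def)
  have "u ^ k = (u ^ ?d) ^ (k div ?d) * u ^ (k mod ?d)"
    by (simp flip: power_mult power_add)
  then have "u ^ (k mod ?d) = 1" using k by (simp add: power_uord_eq_one[OF assms])
  moreover have "k mod ?d < ?d" using assms by simp
  ultimately have "k mod ?d = 0"
    using not_less_Least[of "k mod ?d" "\<lambda>m. m > 0 \<and> u ^ m = 1"] least by auto
  then show "uord u dvd k" by auto
qed

lemma uord_eqI:
  assumes "b > 0" and "\<And>k. (x::'a::ring_1) ^ k = 1 \<longleftrightarrow> b dvd k"
  shows "uord x = b"
proof -
  have "x ^ b = 1" using assms(2) by simp
  then have pos: "uord x > 0" using assms(1) uord_pos_iff by blast
  have "uord x dvd b" using \<open>x ^ b = 1\<close> power_eq_one_iff_uord_dvd[OF pos] by blast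
  moreover have "b dvd uord x" using assms(2) power_uord_eq_one[OF pos] by blast
  ultimately show ?thesis by (rule dvd_antisym)
qed

lemma uord_one: "uord (1::'a::ring_1) = 1"
  by (rule uord_eqI) auto

lemma is_unit_r_if_power_eq_one:
  assumes "m > 0" and "(u::'a::ring_1) ^ m = 1"
  shows "is_unit_r u"
  using assms unfolding is_unit_r_def
  by (metis gr0_implies_Suc power_Suc power_Suc2)

lemma uord_power:
  assumes "uord (x::'a::ring_1) = a * b" and "a * b > 0"
  shows "uord (x ^ a) = b"
proof (rule uord_eqI)
  show "b > 0" using assms(2) by simp
  fix k
  have "(x ^ a) ^ k = 1 \<longleftrightarrow> a * b dvd a * k"
    using power_eq_one_iff_uord_dvd[of x "a * k"] assms by (simp add: power_mult)
  also have "\<dots> \<longleftrightarrow> b dvd k" using assms(2) by simp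
  finally show "(x ^ a) ^ k = 1 \<longleftrightarrow> b dvd k" .
qed

subsection \<open>Orders of commuting units\<close>

lemma power_mult_distrib_commuting:
  assumes "x * y = y * (x::'a::monoid_mult)"
  shows "(x * y) ^ k = x ^ k * y ^ k"
proof (induction k)
  case (Suc k)
  have "(x * y) ^ Suc k = x * (y * x ^ k) * y ^ k"
    by (simp add: Suc mult.assoc)
  also have "\<dots> = x ^ Suc k * y ^ Suc k"
    by (simp add: power_commuting_commutes[OF assms, symmetric] mult.assoc)
  finally show ?case .
qed simp

lemma uord_dvd_if_power_mult_eq_one:
  assumes "x * y = y * (x::'a::ring_1)" and "uord x > 0" and "uord y > 0"
    and "(x * y) ^ k = 1"
  shows "uord y dvd k * uord x"
proof -
  have "(x * y) ^ (k * uord x) = 1"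
    using assms(4) by (simp add: power_mult)
  then have "x ^ (k * uord x) * y ^ (k * uord x) = 1"
    by (simp add: power_mult_distrib_commuting[OF assms(1)])
  moreover have "x ^ (k * uord x) = 1"
    using power_eq_one_iff_uord_dvd[OF assms(2)] by simp
  ultimately show ?thesis using power_eq_one_iff_uord_dvd[OF assms(3)] by simp
qed

lemma uord_mult_coprime:
  assumes comm: "x * y = y * (x::'a::ring_1)" and "uord x = a" and "uord y = b"
    and "a > 0" and "b > 0" and "coprime a b"
  shows "uord (x * y) = a * b"
proof (rule uord_eqI)
  show "a * b > 0" using assms by simp
  fix k
  have px: "uord x > 0" and py: "uord y > 0" using assms by auto
  show "(x * y) ^ k = 1 \<longleftrightarrow> a * b dvd k"
  proof
    assume "a * b dvd k"
    then have "x ^ k = 1" and "y ^ k = 1"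
      using power_eq_one_iff_uord_dvd[OF px] power_eq_one_iff_uord_dvd[OF py] assms
      by (auto intro: dvd_mult_left dvd_mult_right)
    then show "(x * y) ^ k = 1" by (simp add: power_mult_distrib_commuting[OF comm])
  next
    assume "(x * y) ^ k = 1"
    then have "b dvd k * a" and "a dvd k * b"
      using uord_dvd_if_power_mult_eq_one[OF comm px py]
        uord_dvd_if_power_mult_eq_one[OF comm[symmetric] py px] assms
      by (auto simp: comm)
    then show "a * b dvd k"
      using \<open>coprime a b\<close> by (simp add: coprime_commute coprime_dvd_mult_left_iff divides_mult)
  qed
qed

lemma lcm_div_prime_eq:
  fixes a b p :: nat
  assumes p: "prime p" and "p dvd a" and "p dvd b" and "a > 0" and "b > 0"
  shows "lcm (a div p) b = lcm a b \<or> lcm a (b div p) = lcm a b"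
proof (rule ccontr)
  let ?L = "lcm a b" and ?M1 = "lcm (a div p) b" and ?M2 = "lcm a (b div p)"
  assume neq: "\<not> (?M1 = ?L \<or> ?M2 = ?L)"
  have L_pos: "?L > 0" using assms by (simp add: lcm_pos_nat)
  have drop_factor: "?L = p * M" if "M dvd ?L" "?L dvd p * M" "M \<noteq> ?L" for M
  proof -
    obtain t where t: "?L = M * t" using \<open>M dvd ?L\<close> by blast
    with L_pos that(2) have "t dvd p" by (auto simp: mult.commute)
    then have "t = 1 \<or> t = p" using p by (simp add: prime_nat_iff)
    then show ?thesis using t that(3) by auto
  qed
  have "a div p dvd a" and "b div p dvd b"
    using \<open>p dvd a\<close> \<open>p dvd b\<close> by (metis dvd_mult_div_cancel dvd_triv_right)+
  have "a dvd p * ?M1" and "b dvd p * ?M2"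
    using \<open>p dvd a\<close> \<open>p dvd b\<close>
    by (metis dvd_lcm1 dvd_lcm2 dvd_mult_div_cancel mult_dvd_mono dvd_refl)+
  have "?L = p * ?M1"
  proof (rule drop_factor)
    show "?M1 dvd ?L" using \<open>a div p dvd a\<close> by (meson dvd_lcm1 dvd_lcm2 dvd_trans lcm_least)
    show "?L dvd p * ?M1" using \<open>a dvd p * ?M1\<close> by (simp add: lcm_least)
  qed (use neq in auto)
  moreover have "?L = p * ?M2"
  proof (rule drop_factor)
    show "?M2 dvd ?L" using \<open>b div p dvd b\<close> by (meson dvd_lcm1 dvd_lcm2 dvd_trans lcm_least)
    show "?L dvd p * ?M2" using \<open>b dvd p * ?M2\<close> by (simp add: lcm_least)
  qed (use neq in auto)
  ultimately have "?M1 = ?M2" using prime_gt_0_nat[OF p] by simp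
  then have "?L dvd ?M1" by (metis dvd_lcm1 dvd_lcm2 lcm_least)
  moreover have "?M1 > 0" using \<open>?L = p * ?M1\<close> L_pos by (metis gr0I mult_0_right)
  ultimately have "p * ?M1 \<le> 1 * ?M1" using \<open>?L = p * ?M1\<close> by (simp add: dvd_imp_le)
  then show False using \<open>?M1 > 0\<close> prime_gt_1_nat[OF p] by (simp only: mult_le_cancel2) simp
qed

lemma lcm_coprime_factorization:
  fixes a b :: nat
  assumes "a > 0" and "b > 0"
  shows "\<exists>a' b'. a' dvd a \<and> b' dvd b \<and> coprime a' b' \<and> lcm a b = a' * b'"
  using assms
proof (induction "a + b" arbitrary: a b rule: less_induct)
  case less
  show ?case
  proof (cases "coprime a b")
    case True
    then show ?thesis by (intro exI[of _ a] exI[of _ b]) (simp add: lcm_coprime)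
  next
    case False
    then have "gcd a b \<noteq> 1" by (simp add: coprime_iff_gcd_eq_1)
    then obtain p where "prime p" "p dvd gcd a b" using prime_factor_nat by blast
    then have p: "prime p" "p dvd a" "p dvd b" by auto
    have "a div p < a" and "b div p < b"
      using prime_gt_1_nat[OF p(1)] less.prems by (simp_all add: div_less_dividend)
    have "a div p > 0" and "b div p > 0"
      using p less.prems by (auto simp: dvd_div_eq_0_iff)
    have "a div p dvd a" and "b div p dvd b"
      using p by (metis dvd_mult_div_cancel dvd_triv_right)+
    from lcm_div_prime_eq[OF p less.prems] show ?thesis
    proof
      assume lcm_eq: "lcm (a div p) b = lcm a b"
      obtain a' b' where "a' dvd a div p" "b' dvd b" "coprime a' b'" "lcm (a div p) b = a' * b'"
        using less.hyps[of "a div p" b] \<open>a div p < a\<close> \<open>a div p > 0\<close> less.prems by auto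
      with \<open>a div p dvd a\<close> lcm_eq show ?thesis
        by (intro exI[of _ a'] exI[of _ b']) (auto intro: dvd_trans)
    next
      assume lcm_eq: "lcm a (b div p) = lcm a b"
      obtain a' b' where "a' dvd a" "b' dvd b div p" "coprime a' b'" "lcm a (b div p) = a' * b'"
        using less.hyps[of a "b div p"] \<open>b div p < b\<close> \<open>b div p > 0\<close> less.prems by auto
      with \<open>b div p dvd b\<close> lcm_eq show ?thesis
        by (intro exI[of _ a'] exI[of _ b']) (auto intro: dvd_trans)
    qed
  qed
qed

lemma uord_lcm_exists:
  assumes comm: "x * y = y * (x::'a::ring_1)" and "uord x = a" and "uord y = b"
    and "a > 0" and "b > 0"
  shows "\<exists>z::'a. uord z = lcm a b"
proof -
  obtain a' b' where fac: "a' dvd a" "b' dvd b" "coprime a' b'" "lcm a b = a' * b'"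
    using lcm_coprime_factorization[OF assms(4,5)] by blast
  have "a' > 0" and "b' > 0" using fac assms(4,5) by (auto intro: dvd_pos_nat)
  have "uord (x ^ (a div a')) = a'" and "uord (y ^ (b div b')) = b'"
    using uord_power[of x "a div a'" a'] uord_power[of y "b div b'" b'] fac assms by simp_all
  moreover have "x ^ (a div a') * y ^ (b div b') = y ^ (b div b') * x ^ (a div a')"
    by (metis comm power_commuting_commutes)
  ultimately show ?thesis
    using uord_mult_coprime \<open>a' > 0\<close> \<open>b' > 0\<close> fac by metis
qed

lemma uord_Lcm_exists:
  assumes comm: "\<forall>a b::'a::ring_1. a * b = b * a"
    and "finite D" and "\<forall>d\<in>D. d > 0 \<and> (\<exists>x::'a. uord x = d)"
  shows "\<exists>z::'a. uord z = Lcm D"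
  using assms(2,3)
proof (induction D rule: finite_induct)
  case empty
  then show ?case using uord_one by (metis Lcm_empty)
next
  case (insert d D)
  then obtain z x :: 'a where "uord z = Lcm D" "uord x = d" "d > 0" by auto
  moreover have "Lcm D > 0" using insert by (simp add: Lcm_0_iff_nat) (auto intro!: Nat.gr0I)
  ultimately show ?case using uord_lcm_exists[of x z] comm by auto
qed

subsection \<open>Minimal torsion-clean exponents\<close>

definition torsion_clean_decomps :: "bool \<Rightarrow> nat \<Rightarrow> ('a::ring_1 \<times> 'a \<times> 'a) set" where
  "torsion_clean_decomps strong n =
     {(r, e, u). r = e + u \<and> idem e \<and> is_unit_r u \<and> u ^ n = 1 \<and> (strong \<longrightarrow> e * u = u * e)}"

definition minimal_torsion_clean :: "bool \<Rightarrow> nat \<Rightarrow> 'a::ring_1 itself \<Rightarrow> bool" where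
  "minimal_torsion_clean strong n R \<longleftrightarrow>
     n > 0 \<and> tc_prop strong n R \<and> (\<forall>m. 0 < m \<and> m < n \<longrightarrow> \<not> tc_prop strong m R)"

lemma uord_dvd_if_torsion_clean_decomp:
  assumes "(r, e, u) \<in> torsion_clean_decomps strong n" and "n > 0"
  shows "uord u > 0" and "uord u dvd n"
proof -
  have "u ^ n = 1" using assms(1) by (simp add: torsion_clean_decomps_def)
  then show "uord u > 0" using assms(2) uord_pos_iff by blast
  then show "uord u dvd n" using power_eq_one_iff_uord_dvd \<open>u ^ n = 1\<close> by blast
qed

lemma tc_prop_if_decomps_power_eq_one:
  assumes "tc_prop strong n TYPE('a::ring_1)"
    and "\<forall>(r, e, u) \<in> torsion_clean_decomps strong n. (u::'a) ^ m = 1"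
  shows "tc_prop strong m TYPE('a)"
  using assms unfolding tc_prop_def torsion_clean_decomps_def by fastforce

lemma minimal_torsion_clean_eqI:
  assumes "minimal_torsion_clean strong n TYPE('a::ring_1)" and "m > 0" and "m dvd n"
    and "\<forall>(r, e, u) \<in> torsion_clean_decomps strong n. (u::'a) ^ m = 1"
  shows "m = n"
proof -
  have "tc_prop strong m TYPE('a)"
    using assms(1,4) tc_prop_if_decomps_power_eq_one by (auto simp: minimal_torsion_clean_def)
  then have "\<not> m < n" using assms(1,2) by (auto simp: minimal_torsion_clean_def)
  moreover have "m \<le> n" using assms(1,3) by (simp add: minimal_torsion_clean_def dvd_imp_le)
  ultimately show ?thesis by simp
qed

lemma Lcm_uord_torsion_clean_decomps:
  assumes min: "minimal_torsion_clean strong n TYPE('a::ring_1)"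
  defines "D \<equiv> (\<lambda>(r, e, u::'a). uord u) ` torsion_clean_decomps strong n"
  shows "finite D" and "\<forall>d\<in>D. d > 0" and "Lcm D = n"
proof -
  have n_pos: "n > 0" using min by (simp add: minimal_torsion_clean_def)
  have D_divisors: "\<forall>d\<in>D. d > 0 \<and> d dvd n"
    unfolding D_def using uord_dvd_if_torsion_clean_decomp[OF _ n_pos] by fast
  then show "\<forall>d\<in>D. d > 0" by blast
  have "D \<subseteq> {d. d dvd n}" using D_divisors by blast
  then show "finite D" using finite_divisors_nat[OF n_pos] by (rule finite_subset)
  have "Lcm D dvd n" using D_divisors by (auto intro: Lcm_least)
  moreover have "\<forall>(r, e, u) \<in> torsion_clean_decomps strong n. (u::'a) ^ Lcm D = 1"
  proof (clarify)
    fix r e u :: 'a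
    assume decomp: "(r, e, u) \<in> torsion_clean_decomps strong n"
    then have "uord u dvd Lcm D" unfolding D_def by (force intro: dvd_Lcm)
    then show "u ^ Lcm D = 1"
      using power_eq_one_iff_uord_dvd uord_dvd_if_torsion_clean_decomp(1)[OF decomp n_pos] by blast
  qed
  moreover have "Lcm D > 0" using \<open>Lcm D dvd n\<close> n_pos by (auto intro: Nat.gr0I)
  ultimately show "Lcm D = n" using minimal_torsion_clean_eqI[OF min] by blast
qed

lemma torsion_clean_decomps_list_Lcm:
  assumes "minimal_torsion_clean strong n TYPE('a::ring_1)"
  shows "\<exists>ds :: ('a \<times> 'a \<times> 'a) list. set ds \<subseteq> torsion_clean_decomps strong n \<and>
           n = Lcm (set (map (\<lambda>(r, e, u). uord u) ds))"
proof -
  let ?f = "\<lambda>(r, e, u::'a). uord u"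
  obtain C where "C \<subseteq> torsion_clean_decomps strong n" "finite C"
      "?f ` torsion_clean_decomps strong n = ?f ` C"
    using finite_subset_image[OF Lcm_uord_torsion_clean_decomps(1)[OF assms] subset_refl] by blast
  moreover obtain ds where "set ds = C" using \<open>finite C\<close> finite_list by blast
  ultimately show ?thesis
    using Lcm_uord_torsion_clean_decomps(3)[OF assms] by (metis set_map)
qed

lemma minimal_torsion_clean_dvd_units_exponent:
  assumes min: "minimal_torsion_clean strong n TYPE('a::ring_1)"
    and exp: "units_exponent TYPE('a) s"
  shows "n dvd s"
proof -
  have n_pos: "n > 0" using min by (simp add: minimal_torsion_clean_def)
  have "\<forall>(r, e, u) \<in> torsion_clean_decomps strong n. (u::'a) ^ gcd n s = 1"
  proof (clarify)
    fix r e u :: 'a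
    assume decomp: "(r, e, u) \<in> torsion_clean_decomps strong n"
    then have "u ^ s = 1" using exp by (simp add: torsion_clean_decomps_def units_exponent_def)
    moreover have pos: "uord u > 0" and "uord u dvd n"
      using uord_dvd_if_torsion_clean_decomp[OF decomp n_pos] by auto
    ultimately have "uord u dvd gcd n s" using power_eq_one_iff_uord_dvd[OF pos] by simp
    then show "u ^ gcd n s = 1" using power_eq_one_iff_uord_dvd[OF pos] by simp
  qed
  then have "gcd n s = n" using minimal_torsion_clean_eqI[OF min] n_pos by simp
  then show ?thesis by (metis gcd_dvd2)
qed

lemma minimal_torsion_clean_comm_uord_eq:
  assumes min: "minimal_torsion_clean strong n TYPE('a::ring_1)"
    and comm: "\<forall>a b::'a. a * b = b * a"
  shows "\<exists>u::'a. is_unit_r u \<and> uord u = n"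
proof -
  have n_pos: "n > 0" using min by (simp add: minimal_torsion_clean_def)
  note D = Lcm_uord_torsion_clean_decomps[OF min]
  obtain z :: 'a where z: "uord z = n"
    using uord_Lcm_exists[OF comm D(1)] D(2,3) by fastforce
  then have "is_unit_r z"
    using is_unit_r_if_power_eq_one power_uord_eq_one n_pos by metis
  with z show ?thesis by blast
qed

theorem lemma1p1:
  fixes n :: nat
  shows "(n_torsion_clean n TYPE('a::ring_1) \<longrightarrow>
           (\<exists>ds :: ('a \<times> 'a \<times> 'a) list.
              (\<forall>(r, e, u) \<in> set ds. r = e + u \<and> idem e \<and> is_unit_r u) \<and>
              n = Lcm (set (map (\<lambda>(r, e, u). uord u) ds))))
       \<and> (strongly_n_torsion_clean n TYPE('a) \<longrightarrow>
           (\<exists>ds :: ('a \<times> 'a \<times> 'a) list.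
              (\<forall>(r, e, u) \<in> set ds. r = e + u \<and> idem e \<and> is_unit_r u \<and> e * u = u * e) \<and>
              n = Lcm (set (map (\<lambda>(r, e, u). uord u) ds))))
       \<and> (n_torsion_clean n TYPE('a) \<or> strongly_n_torsion_clean n TYPE('a) \<longrightarrow>
           (\<forall>s. units_exponent TYPE('a) s \<longrightarrow> n dvd s) \<and>
           ((\<forall>a b :: 'a. a * b = b * a) \<longrightarrow> (\<exists>u :: 'a. is_unit_r u \<and> uord u = n)))"
proof -
  have clean: "n_torsion_clean n TYPE('a) = minimal_torsion_clean False n TYPE('a)"
    and strong: "strongly_n_torsion_clean n TYPE('a) = minimal_torsion_clean True n TYPE('a)"
    by (simp_all add: n_torsion_clean_def strongly_n_torsion_clean_def minimal_torsion_clean_def)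
  have decomps: "\<exists>ds :: ('a \<times> 'a \<times> 'a) list.
      (\<forall>(r, e, u) \<in> set ds. r = e + u \<and> idem e \<and> is_unit_r u \<and> (strong \<longrightarrow> e * u = u * e)) \<and>
      n = Lcm (set (map (\<lambda>(r, e, u). uord u) ds))"
    if "minimal_torsion_clean strong n TYPE('a)" for strong
    using torsion_clean_decomps_list_Lcm[OF that]
    by (fastforce simp: torsion_clean_decomps_def subset_iff)
  show ?thesis
    using decomps[of False] decomps[of True]
      minimal_torsion_clean_dvd_units_exponent[of False n] minimal_torsion_clean_dvd_units_exponent[of True n]
      minimal_torsion_clean_comm_uord_eq[of False n] minimal_torsion_clean_comm_uord_eq[of True n]
    unfolding clean strong by auto
qed

end
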